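(* Let $\pi_1,\pi_2,\pi_3$ be patterns such that $(\pi_1,\pi_2)$ and $(\pi_2,\pi_3)$ are chainable. Then (1) $(\pi_1,\pi_2*\pi_3)$ and $(\pi_1*\pi_2,\pi_3)$ are chainable; (2) $r(\pi_1,\pi_2*\pi_3)=r(\pi_1,\pi_2)$ and $r(\pi_1*\pi_2,\pi_3)=r(\pi_2,\pi_3)$; (3) $\pi_1*(\pi_2*\pi_3)=(\pi_1*\pi_2)*\pi_3$.
   Context: A pattern is a tuple $\pi=(a,b,c,d)$ of positive integers. Two patterns $\pi=(a,b,c,d)$, $\pi'=(a',b',c',d')$ are chainable if $ac/a'=b'd'/d$, this common value (denoted $r(\pi,\pi')$) is an integer, $a\mid a'$ and $d'\mid d$. For a chainable pair, $\pi*\pi':=(a,\,bd/d',\,a'c'/a,\,d')$. *)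

theory Defs
  imports Main "HOL.Rat"
begin

type_synonym pattern = "nat \<times> nat \<times> nat \<times> nat"

definition is_pattern :: "pattern \<Rightarrow> bool" where
  "is_pattern p = (case p of (a, b, c, d) \<Rightarrow> a > 0 \<and> b > 0 \<and> c > 0 \<and> d > 0)"

definition ratio :: "pattern \<Rightarrow> pattern \<Rightarrow> rat" where
  "ratio p q = (case p of (a, b, c, d) \<Rightarrow> case q of (a', b', c', d') \<Rightarrow>
      of_nat (a * c) / of_nat a')"

definition chainable :: "pattern \<Rightarrow> pattern \<Rightarrow> bool" where
  "chainable p q = (case p of (a, b, c, d) \<Rightarrow> case q of (a', b', c', d') \<Rightarrow>
      of_nat (a * c) / of_nat a' = (of_nat (b' * d') / of_nat d :: rat)
      \<and> of_nat (a * c) / of_nat a' \<in> (\<int> :: rat set)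
      \<and> a dvd a' \<and> d' dvd d)"

text \<open>pi * pi' = (a, b d / d', a' c' / a, d'); the divisions are exact for chainable pairs.\<close>
definition pstar :: "pattern \<Rightarrow> pattern \<Rightarrow> pattern" where
  "pstar p q = (case p of (a, b, c, d) \<Rightarrow> case q of (a', b', c', d') \<Rightarrow>
      (a, b * d div d', a' * c' div a, d'))"

end

theory Submission
  imports Defs
begin

text \<open>For a chainable pair the divisions in \<open>\<pi> * \<pi>'\<close> are exact, so the product is
  \<open>(a, b \<cdot> (d / d'), (a' / a) \<cdot> c', d')\<close> with integer quotients. Associativity of \<open>*\<close>
  is then the telescoping \<open>(d\<^sub>1 / d\<^sub>2)(d\<^sub>2 / d\<^sub>3) = d\<^sub>1 / d\<^sub>3\<close> (and likewise for the \<open>a\<^sub>i\<close>),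
  and the ratio \<open>a c / a'\<close> is unchanged because \<open>a \<cdot> (a\<^sub>2 / a\<^sub>1) c\<^sub>2 = a\<^sub>2 c\<^sub>2\<close>.\<close>

lemma div_mult_div_cancel:
  fixes a b c :: "'a :: semidom_divide"
  assumes "c dvd b" and "b dvd a"
  shows "a div b * (b div c) = a div c"
proof (cases "b = 0")
  case True
  with assms show ?thesis by simp
next
  case False
  from assms obtain m k where b: "b = c * m" and a: "a = b * k" by blast
  with False have "c \<noteq> 0" by auto
  have "a div b = k" using False by (simp add: a)
  moreover have "b div c = m" "a div c = m * k"
    using \<open>c \<noteq> 0\<close> by (simp_all add: a b mult.assoc)
  ultimately show ?thesis by (simp add: mult.commute)
qed

lemma pstar_eq:
  assumes "a dvd a'" and "d' dvd d"
  shows "pstar (a, b, c, d) (a', b', c', d') = (a, b * (d div d'), a' div a * c', d')"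
  using assms by (simp add: pstar_def div_mult_swap dvd_div_mult)

lemma chainable_dvd:
  assumes "chainable (a, b, c, d) (a', b', c', d')"
  shows "a dvd a'" and "d' dvd d"
  using assms by (simp_all add: chainable_def)

lemma ratio_pstar_right: "ratio p (pstar q s) = ratio p q"
  by (simp add: ratio_def pstar_def split: prod.split)

lemma ratio_pstar_left:
  assumes "a dvd a'"
  shows "ratio (pstar (a, b, c, d) (a', b', c', d')) s = ratio (a', b', c', d') s"
proof -
  have "a * (a' * c' div a) = a' * c'" using assms by simp
  then show ?thesis by (simp add: ratio_def pstar_def del: of_nat_mult split: prod.split)
qed

lemma pstar_assoc:
  assumes "a\<^sub>1 dvd a\<^sub>2" "a\<^sub>2 dvd a\<^sub>3" "d\<^sub>2 dvd d\<^sub>1" "d\<^sub>3 dvd d\<^sub>2"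
  shows "pstar (a\<^sub>1, b\<^sub>1, c\<^sub>1, d\<^sub>1) (pstar (a\<^sub>2, b\<^sub>2, c\<^sub>2, d\<^sub>2) (a\<^sub>3, b\<^sub>3, c\<^sub>3, d\<^sub>3))
       = pstar (pstar (a\<^sub>1, b\<^sub>1, c\<^sub>1, d\<^sub>1) (a\<^sub>2, b\<^sub>2, c\<^sub>2, d\<^sub>2)) (a\<^sub>3, b\<^sub>3, c\<^sub>3, d\<^sub>3)"
proof -
  have "a\<^sub>1 dvd a\<^sub>3" "d\<^sub>3 dvd d\<^sub>1" using assms by (meson dvd_trans)+
  moreover have "a\<^sub>2 div a\<^sub>1 * (a\<^sub>3 div a\<^sub>2) = a\<^sub>3 div a\<^sub>1"
    using assms div_mult_div_cancel [of a\<^sub>1 a\<^sub>2 a\<^sub>3] by (simp add: mult.commute)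
  ultimately show ?thesis
    using assms by (simp add: pstar_eq div_mult_div_cancel mult.assoc)
qed

lemma chainable_pstar_right:
  assumes "chainable (a\<^sub>1, b\<^sub>1, c\<^sub>1, d\<^sub>1) (a\<^sub>2, b\<^sub>2, c\<^sub>2, d\<^sub>2)"
    and "chainable (a\<^sub>2, b\<^sub>2, c\<^sub>2, d\<^sub>2) (a\<^sub>3, b\<^sub>3, c\<^sub>3, d\<^sub>3)"
  shows "chainable (a\<^sub>1, b\<^sub>1, c\<^sub>1, d\<^sub>1) (pstar (a\<^sub>2, b\<^sub>2, c\<^sub>2, d\<^sub>2) (a\<^sub>3, b\<^sub>3, c\<^sub>3, d\<^sub>3))"
proof -
  have "a\<^sub>2 dvd a\<^sub>3" "d\<^sub>3 dvd d\<^sub>2" using chainable_dvd [OF assms(2)] .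
  then have "pstar (a\<^sub>2, b\<^sub>2, c\<^sub>2, d\<^sub>2) (a\<^sub>3, b\<^sub>3, c\<^sub>3, d\<^sub>3) =
      (a\<^sub>2, b\<^sub>2 * (d\<^sub>2 div d\<^sub>3), a\<^sub>3 div a\<^sub>2 * c\<^sub>3, d\<^sub>3)"
    by (rule pstar_eq)
  moreover have exact_div: "b\<^sub>2 * (d\<^sub>2 div d\<^sub>3) * d\<^sub>3 = b\<^sub>2 * d\<^sub>2"
    using \<open>d\<^sub>3 dvd d\<^sub>2\<close> by (simp add: mult.assoc)
  moreover have "d\<^sub>3 dvd d\<^sub>1"
    using \<open>d\<^sub>3 dvd d\<^sub>2\<close> chainable_dvd(2) [OF assms(1)] by (rule dvd_trans)
  ultimately show ?thesis
    using assms(1) by (auto simp add: chainable_def exact_div simp del: of_nat_mult)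
qed

lemma chainable_pstar_left:
  assumes "chainable (a\<^sub>1, b\<^sub>1, c\<^sub>1, d\<^sub>1) (a\<^sub>2, b\<^sub>2, c\<^sub>2, d\<^sub>2)"
    and "chainable (a\<^sub>2, b\<^sub>2, c\<^sub>2, d\<^sub>2) (a\<^sub>3, b\<^sub>3, c\<^sub>3, d\<^sub>3)"
  shows "chainable (pstar (a\<^sub>1, b\<^sub>1, c\<^sub>1, d\<^sub>1) (a\<^sub>2, b\<^sub>2, c\<^sub>2, d\<^sub>2)) (a\<^sub>3, b\<^sub>3, c\<^sub>3, d\<^sub>3)"
proof -
  have "a\<^sub>1 dvd a\<^sub>2" "d\<^sub>2 dvd d\<^sub>1" using chainable_dvd [OF assms(1)] .
  then have "pstar (a\<^sub>1, b\<^sub>1, c\<^sub>1, d\<^sub>1) (a\<^sub>2, b\<^sub>2, c\<^sub>2, d\<^sub>2) =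
      (a\<^sub>1, b\<^sub>1 * (d\<^sub>1 div d\<^sub>2), a\<^sub>2 div a\<^sub>1 * c\<^sub>2, d\<^sub>2)"
    by (rule pstar_eq)
  moreover have exact_div: "a\<^sub>1 * (a\<^sub>2 div a\<^sub>1 * c\<^sub>2) = a\<^sub>2 * c\<^sub>2"
    using \<open>a\<^sub>1 dvd a\<^sub>2\<close> by (simp flip: mult.assoc)
  moreover have "a\<^sub>1 dvd a\<^sub>3"
    using \<open>a\<^sub>1 dvd a\<^sub>2\<close> chainable_dvd(1) [OF assms(2)] by (rule dvd_trans)
  ultimately show ?thesis
    using assms(2) by (auto simp add: chainable_def exact_div simp del: of_nat_mult)
qed

theorem lemma4p7:
  fixes p1 p2 p3 :: pattern
  assumes "is_pattern p1" and "is_pattern p2" and "is_pattern p3"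
    and "chainable p1 p2" and "chainable p2 p3"
  shows "chainable p1 (pstar p2 p3) \<and> chainable (pstar p1 p2) p3
    \<and> ratio p1 (pstar p2 p3) = ratio p1 p2 \<and> ratio (pstar p1 p2) p3 = ratio p2 p3
    \<and> pstar p1 (pstar p2 p3) = pstar (pstar p1 p2) p3"
proof -
  obtain a\<^sub>1 b\<^sub>1 c\<^sub>1 d\<^sub>1 where p1: "p1 = (a\<^sub>1, b\<^sub>1, c\<^sub>1, d\<^sub>1)" by (cases p1) auto
  obtain a\<^sub>2 b\<^sub>2 c\<^sub>2 d\<^sub>2 where p2: "p2 = (a\<^sub>2, b\<^sub>2, c\<^sub>2, d\<^sub>2)" by (cases p2) auto
  obtain a\<^sub>3 b\<^sub>3 c\<^sub>3 d\<^sub>3 where p3: "p3 = (a\<^sub>3, b\<^sub>3, c\<^sub>3, d\<^sub>3)" by (cases p3) auto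
  note chain12 = assms(4) [unfolded p1 p2] and chain23 = assms(5) [unfolded p2 p3]
  show ?thesis
    unfolding p1 p2 p3
    using chainable_pstar_right [OF chain12 chain23] chainable_pstar_left [OF chain12 chain23]
      ratio_pstar_right ratio_pstar_left [OF chainable_dvd(1) [OF chain12]]
      pstar_assoc [OF chainable_dvd(1) [OF chain12] chainable_dvd(1) [OF chain23]
        chainable_dvd(2) [OF chain12] chainable_dvd(2) [OF chain23]]
    by blast
qed

end
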